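(* Fix an initial exchange matrix $B^0$ and initial coefficients $p_1,\dots,p_n\in\mathbb P$ at the vertex $v_0$, and let $\mathcal S=\mathbb{Q}\mathbb{P}_{\mathrm{sf}}(y_1,\dots,y_n)$. Then for every vertex $v\in\mathbb T^n$ and every $j\in[1,n]$, $$\widetilde Y_{j;v}=\frac{Y^{\mathcal S}_{j;v}(p_1y_1,\dots,p_ny_n)}{p_{j;v}},$$ where $Y^{\mathcal S}_{j;v}(p_1y_1,\dots,p_ny_n)$ denotes the image of $Y_{j;v}\in\mathbb Q_{\mathrm{sf}}(y_1,\dots,y_n)$ under the unique semifield morphism $\mathbb Q_{\mathrm{sf}}(y_1,\dots,y_n)\to\mathcal S$ sending $y_i\mapsto p_iy_i$.
   Context: A semifield $(\mathbb P,\oplus,\cdot,1)$ satisfies the field axioms except that the auxiliary addition $\oplus$ need not have a neutral element or inverses. For $p\in\mathbb P$ set $p^+=p/(p\oplus 1)$, $p^-=1/(p\oplus1)$, and for $x\in\mathbb R$: $p^{[\![x]\!]}=p^-$ if $x<0$, $=1$ if $x=0$, $=p^+$ if $x>0$. For a set $S$, the universal semifield $\mathbb Q_{\mathrm{sf}}(S)\subset\mathbb Q(S)$ consists of rational functions expressible as ratios of polynomials in $S$ with positive integer coefficients; for any semifield $\mathbb P'$ and any map $S\to\mathbb P'$ there is a unique semifield morphism $\mathbb Q_{\mathrm{sf}}(S)\to\mathbb P'$ extending it, and the image of $f$ under the morphism $s_i\mapsto q_i$ is written $f^{\mathbb P'}(q_1,\dots)$. For a semifield $\mathbb P$, $\mathbb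 Z\mathbb P$ is the group ring (a domain), $\mathbb Q\mathbb P$ its fraction field, and $\mathbb Q\mathbb P_{\mathrm{sf}}(u_1,\dots,u_n)\subset\mathbb Q\mathbb P(u_1,\dots,u_n)$ the semifield of rational functions $f/g$ with $f,g$ nonzero polynomials in the $u_i$ whose coefficients are nonnegative integer combinations of elements of $\mathbb P$ (with ordinary $+$ and $\cdot$). Matrix mutation in direction $k$ of a skew-symmetrizable $B=(b_{ij})$: $b'_{ij}=-b_{ij}$ if $i=k$ or $j=k$, else $b'_{ij}=b_{ij}+\operatorname{sgn}(b_{ik})[b_{ik}b_{kj}]_+$, with $[x]_+=\max(x,0)$. A $Y$-seed $(\mathbf y,B)$ in a semifield mutates in direction $k$ to $(\mathbf y',B')$ with $y'_k=y_k^{-1}$ and $y'_j=y_j(1\oplus y_k^{-\operatorname{sgn}(b_{kj})})^{-b_{kj}}$ for $j\ne k$. A labeled $Y$-seed with coefficients is a triple $(\mathbf y,\mathbf p,B)$ with $(\mathbf p,B)$ a $Y$-seed in $\mathbb P$ and $(\mathbf y,B)$ a $Y$-seed in some $\mathbb Q\mathbb P_{\mathrm{sf}}(u_1,\dots,u_n)$; its mutation in direction $k$ is $(\mathbf y',\mathbf p',B')$ where $(\mathbf p',B')$ is the $Y$-seed mutation of $(\mathbf p,B)$, $y'_k=y_k^{-1}$, and for $j\neq k$: $y'_j=y_j\big(p_k^{[\![b_{kj}]\!]}+p_k^{[\![-b_{kj}]\!]}y_k^{-\operatorname{sgn}(b_{kj})}\big)^{-b_{kj}}$ (ordinary addition).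 $\mathbb T^n$ is the $n$-regular tree with edges labeled by $[1,n]$ so that edges at a vertex have distinct labels, with initial vertex $v_0$; a ($Y$-)pattern is an assignment of seeds to vertices such that seeds at vertices joined by an edge labeled $k$ are related by mutation in direction $k$. $Y_{j;v}\in\mathbb Q_{\mathrm{sf}}(y_1,\dots,y_n)$ are the components of the $Y$-pattern $v\mapsto((Y_{1;v},\dots,Y_{n;v}),B_v)$ with initial seed $((y_1,\dots,y_n),B^0)$ at $v_0$; $\widetilde Y_{j;v}\in\mathbb Q\mathbb P_{\mathrm{sf}}(y_1,\dots,y_n)$ and $p_{j;v}\in\mathbb P$ are the components of the $Y$-pattern with coefficients $v\mapsto((\widetilde Y_{1;v},\dots,\widetilde Y_{n;v}),(p_{1;v},\dots,p_{n;v}),B_v)$ with initial seed $((y_1,\dots,y_n),(p_1,\dots,p_n),B^0)$ at $v_0$. *)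

theory Defs
  imports Main "HOL-Library.Poly_Mapping"
begin

text \<open>No neutral element or inverses for sfadd.\<close>

class semifield = comm_monoid_mult + inverse +
  fixes sfadd :: "'a \<Rightarrow> 'a \<Rightarrow> 'a" (infixl "\<oplus>" 65)
  assumes sf_left_inverse: "inverse a * a = 1"
    and sf_divide: "a / b = a * inverse b"
    and sfadd_assoc: "(a \<oplus> b) \<oplus> c = a \<oplus> (b \<oplus> c)"
    and sfadd_comm: "a \<oplus> b = b \<oplus> a"
    and sf_distrib: "a * (b \<oplus> c) = a * b \<oplus> a * c"

definition spow :: "'a::semifield \<Rightarrow> int \<Rightarrow> 'a" where
  "spow x k = (if 0 \<le> k then x ^ nat k else inverse x ^ nat (- k))"

definition pplus :: "'a::semifield \<Rightarrow> 'a" where "pplus p = p / (p \<oplus> 1)"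
definition pminus :: "'a::semifield \<Rightarrow> 'a" where "pminus p = 1 / (p \<oplus> 1)"

definition pbr :: "'a::semifield \<Rightarrow> int \<Rightarrow> 'a" where
  "pbr p x = (if x < 0 then pminus p else if x = 0 then 1 else pplus p)"

text \<open>Wrapper writing the multiplicative group of P additively, so that the
 finitely supported int-valued functions on mg with Poly_Mapping's convolution product is the group ring ZP.\<close>
datatype 'p mg = MG 'p

instantiation mg :: (semifield) comm_monoid_add
begin
fun plus_mg :: "'a mg \<Rightarrow> 'a mg \<Rightarrow> 'a mg" where
  "plus_mg (MG a) (MG b) = MG (a * b)"
definition zero_mg :: "'a mg" where "zero_mg = MG 1"
instance
proof
  fix a b c :: "'a mg"
  show "a + b + c = a + (b + c)"
    by (cases a; cases b; cases c) (simp add: mult.assoc)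
  show "a + b = b + a"
    by (cases a; cases b) (simp add: mult.commute)
  show "0 + a = a"
    by (cases a) (simp add: zero_mg_def)
qed
end

type_synonym 'p ZP = "'p mg \<Rightarrow>\<^sub>0 int"
text \<open>Polynomials in y_0, y_1, ... with coefficients in ZP (keys are exponent vectors).\<close>
type_synonym 'p ZPy = "(nat \<Rightarrow>\<^sub>0 nat) \<Rightarrow>\<^sub>0 'p ZP"

definition cP :: "'p::semifield \<Rightarrow> 'p ZPy" where
  "cP p = Poly_Mapping.single 0 (Poly_Mapping.single (MG p) 1)"

definition yv :: "nat \<Rightarrow> 'p::semifield ZPy" where
  "yv i = Poly_Mapping.single (Poly_Mapping.single i 1) 1"

text \<open>ZP[y] is a domain, so QP(y) = Frac(ZP[y]); a fraction is a pair (num, den)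
 and equality in the fraction field is cross-multiplication.\<close>
type_synonym 'p frac = "'p ZPy \<times> 'p ZPy"

definition feq :: "'p::semifield frac \<Rightarrow> 'p frac \<Rightarrow> bool" where
  "feq a b \<longleftrightarrow> fst a * snd b = fst b * snd a"

definition fadd :: "'p::semifield frac \<Rightarrow> 'p frac \<Rightarrow> 'p frac" where
  "fadd a b = (fst a * snd b + fst b * snd a, snd a * snd b)"
definition fmul :: "'p::semifield frac \<Rightarrow> 'p frac \<Rightarrow> 'p frac" where
  "fmul a b = (fst a * fst b, snd a * snd b)"
definition finv :: "'p::semifield frac \<Rightarrow> 'p frac" where
  "finv a = (snd a, fst a)"
definition fone :: "'p::semifield frac" where
  "fone = (1, 1)"
definition fconst :: "'p::semifield ZPy \<Rightarrow> 'p frac" where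
  "fconst f = (f, 1)"

fun fnpow :: "'p::semifield frac \<Rightarrow> nat \<Rightarrow> 'p frac" where
  "fnpow a 0 = fone"
| "fnpow a (Suc m) = fmul a (fnpow a m)"

definition fpow :: "'p::semifield frac \<Rightarrow> int \<Rightarrow> 'p frac" where
  "fpow a k = (if 0 \<le> k then fnpow a (nat k) else fnpow (finv a) (nat (- k)))"

text \<open>Elements of Q_sf(y_0,y_1,...) are represented by subtraction-free expressions;
 the unique semifield morphism to a semifield sends the element denoted by an
 expression to the evaluation of that expression.\<close>
datatype sfe = SVar nat | SOne | SAdd sfe sfe | SMul sfe sfe | SInv sfe

fun snpow :: "sfe \<Rightarrow> nat \<Rightarrow> sfe" where
  "snpow e 0 = SOne"
| "snpow e (Suc m) = SMul e (snpow e m)"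

definition sepow :: "sfe \<Rightarrow> int \<Rightarrow> sfe" where
  "sepow e k = (if 0 \<le> k then snpow e (nat k) else snpow (SInv e) (nat (- k)))"

text \<open>Evaluation in S = QP_sf(y) (auxiliary addition of S = ordinary addition).\<close>
fun evalS :: "(nat \<Rightarrow> 'p::semifield frac) \<Rightarrow> sfe \<Rightarrow> 'p frac" where
  "evalS \<rho> (SVar i) = \<rho> i"
| "evalS \<rho> SOne = fone"
| "evalS \<rho> (SAdd a b) = fadd (evalS \<rho> a) (evalS \<rho> b)"
| "evalS \<rho> (SMul a b) = fmul (evalS \<rho> a) (evalS \<rho> b)"
| "evalS \<rho> (SInv a) = finv (evalS \<rho> a)"

type_synonym exmat = "nat \<Rightarrow> nat \<Rightarrow> int"

definition bmut :: "nat \<Rightarrow> exmat \<Rightarrow> exmat" where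
  "bmut k B i j = (if i = k \<or> j = k then - B i j
     else B i j + sgn (B i k) * max (B i k * B k j) 0)"

definition skew_symmetrizable :: "nat \<Rightarrow> exmat \<Rightarrow> bool" where
  "skew_symmetrizable n B \<longleftrightarrow>
     (\<exists>d::nat \<Rightarrow> int. (\<forall>i<n. 0 < d i) \<and> (\<forall>i<n. \<forall>j<n. d i * B i j = - (d j * B j i)))"

definition ymut_sf :: "nat \<Rightarrow> (nat \<Rightarrow> sfe) \<times> exmat \<Rightarrow> (nat \<Rightarrow> sfe) \<times> exmat" where
  "ymut_sf k s = (let y = fst s; B = snd s in
     ((\<lambda>j. if j = k then SInv (y k)
           else SMul (y j) (sepow (SAdd SOne (sepow (y k) (- sgn (B k j)))) (- B k j))),
      bmut k B))"

definition ymut_P :: "nat \<Rightarrow> (nat \<Rightarrow> 'p::semifield) \<times> exmat \<Rightarrow> (nat \<Rightarrow> 'p) \<times> exmat" where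
  "ymut_P k s = (let y = fst s; B = snd s in
     ((\<lambda>j. if j = k then inverse (y k)
           else y j * spow (1 \<oplus> spow (y k) (- sgn (B k j))) (- B k j)),
      bmut k B))"

definition ymut_coef :: "nat \<Rightarrow> (nat \<Rightarrow> 'p::semifield frac) \<times> (nat \<Rightarrow> 'p) \<times> exmat
    \<Rightarrow> (nat \<Rightarrow> 'p frac) \<times> (nat \<Rightarrow> 'p) \<times> exmat" where
  "ymut_coef k s = (let y = fst s; p = fst (snd s); B = snd (snd s) in
     ((\<lambda>j. if j = k then finv (y k)
           else fmul (y j)
             (fpow (fadd (fconst (cP (pbr (p k) (B k j))))
                         (fmul (fconst (cP (pbr (p k) (- B k j)))) (fpow (y k) (- sgn (B k j)))))
                   (- B k j))),
      ymut_P k (p, B)))"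

text \<open>Vertices of T^n correspond to reduced words (no two consecutive equal labels)
 in labels 0..n-1: the label sequence of the unique path from v0.\<close>
definition tree_vertex :: "nat \<Rightarrow> nat list \<Rightarrow> bool" where
  "tree_vertex n ks \<longleftrightarrow> set ks \<subseteq> {..<n} \<and> (\<forall>i. Suc i < length ks \<longrightarrow> ks ! i \<noteq> ks ! Suc i)"

definition Y_sf :: "exmat \<Rightarrow> nat list \<Rightarrow> nat \<Rightarrow> sfe" where
  "Y_sf B0 ks j = fst (fold ymut_sf ks (SVar, B0)) j"

definition coef_seed :: "exmat \<Rightarrow> (nat \<Rightarrow> 'p::semifield) \<Rightarrow> nat list
    \<Rightarrow> (nat \<Rightarrow> 'p frac) \<times> (nat \<Rightarrow> 'p) \<times> exmat" where
  "coef_seed B0 p0 ks = fold ymut_coef ks ((\<lambda>i. fconst (yv i)), p0, B0)"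

definition Ytilde :: "exmat \<Rightarrow> (nat \<Rightarrow> 'p::semifield) \<Rightarrow> nat list \<Rightarrow> nat \<Rightarrow> 'p frac" where
  "Ytilde B0 p0 ks j = fst (coef_seed B0 p0 ks) j"

definition pcoef :: "exmat \<Rightarrow> (nat \<Rightarrow> 'p::semifield) \<Rightarrow> nat list \<Rightarrow> nat \<Rightarrow> 'p" where
  "pcoef B0 p0 ks j = fst (snd (coef_seed B0 p0 ks)) j"

end

theory Submission
  imports Defs
begin

text \<open>
  Call a fraction a a rescaling of b / c if the numerator and denominator of a are those of
  b / c multiplied by one common factor. Along every sequence of mutations each Ytilde_j is a
  rescaling of Y_j(p_1 y_1, ...) / p_j. Initially Ytilde_j = y_j = (p_j y_j) / p_j, and inverses
  and products preserve rescalings. The only computation is the binomial of the mutation rule: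
  if Ytilde_k rescales Y / p, then p^+ + p^- Ytilde_k^-1 rescales (1 + Y^-1) / (1 \<oplus> p^-1) since
  p^+ (1 \<oplus> p^-1) = 1, and p^- + p^+ Ytilde_k rescales (1 + Y) / (1 \<oplus> p) since p^- (1 \<oplus> p) = 1;
  these denominators are exactly the factors by which the coefficient p_j changes.
\<close>

lemma sf_right_inverse: "(a::'a::semifield) * inverse a = 1"
  using sf_left_inverse[of a] by (simp add: mult.commute)

lemma pplus_eq_mult_pminus: "pplus q = q * pminus (q::'a::semifield)"
  by (simp add: pplus_def pminus_def sf_divide)

lemma pminus_mult_one_sfadd: "pminus q * (1 \<oplus> q) = (1::'a::semifield)"
  by (simp add: pminus_def sf_divide sfadd_comm sf_left_inverse)

lemma pplus_mult_one_sfadd_inverse: "pplus q * (1 \<oplus> inverse q) = (1::'a::semifield)"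
proof -
  have "q * (1 \<oplus> inverse q) = 1 \<oplus> q"
    by (simp add: sf_distrib sf_right_inverse sfadd_comm)
  then have "pplus q * (1 \<oplus> inverse q) = pminus q * (1 \<oplus> q)"
    by (metis pplus_eq_mult_pminus mult.assoc mult.commute)
  then show ?thesis
    by (simp add: pminus_mult_one_sfadd)
qed

lemma cP_one: "cP (1::'a::semifield) = 1"
  by (simp add: cP_def zero_mg_def[symmetric])

lemma cP_mult: "cP (a * b) = cP a * cP (b::'a::semifield)"
  by (simp add: cP_def mult_single)

lemma cP_mult_inverse: "cP (a::'a::semifield) * cP (inverse a) = 1"
  by (simp add: cP_mult[symmetric] sf_right_inverse cP_one)

lemma evalS_sepow: "evalS \<rho> (sepow e k) = fpow (evalS \<rho> e) k"
proof -
  have "evalS \<rho> (snpow e m) = fnpow (evalS \<rho> e) m" for e m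
    by (induction m) auto
  then show ?thesis
    by (simp add: sepow_def fpow_def)
qed

definition rescaled_quot :: "'p::semifield frac \<Rightarrow> 'p frac \<Rightarrow> 'p ZPy \<Rightarrow> bool" where
  "rescaled_quot a b c \<longleftrightarrow> (\<exists>l. a = (l * fst b, l * snd b * c))"

lemma rescaled_quot_feq:
  "rescaled_quot a b c \<Longrightarrow> feq a (fmul b (finv (fconst c)))"
  by (auto simp: rescaled_quot_def feq_def fmul_def finv_def fconst_def ac_simps)

lemma rescaled_quot_fone: "rescaled_quot fone fone (cP 1)"
  by (auto simp: rescaled_quot_def fone_def cP_one intro: exI[of _ 1])

lemma rescaled_quot_fmul:
  assumes "rescaled_quot a b c" and "rescaled_quot a' b' c'"
  shows "rescaled_quot (fmul a a') (fmul b b') (c * c')"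
proof -
  obtain l l' where "a = (l * fst b, l * snd b * c)" and "a' = (l' * fst b', l' * snd b' * c')"
    using assms by (auto simp: rescaled_quot_def)
  then show ?thesis
    by (auto simp: rescaled_quot_def fmul_def ac_simps intro: exI[of _ "l * l'"])
qed

lemma rescaled_quot_finv:
  assumes "rescaled_quot a b (cP q)"
  shows "rescaled_quot (finv a) (finv b) (cP (inverse q))"
proof -
  obtain l where "a = (l * fst b, l * snd b * cP q)"
    using assms by (auto simp: rescaled_quot_def)
  moreover have "l * fst b * cP q * cP (inverse q) = l * fst b"
    by (simp add: cP_mult_inverse mult.assoc)
  ultimately show ?thesis
    by (auto simp: rescaled_quot_def finv_def ac_simps intro: exI[of _ "l * cP q"])
qed

lemma rescaled_quot_fnpow:
  assumes "rescaled_quot a b (cP q)"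
  shows "rescaled_quot (fnpow a m) (fnpow b m) (cP (q ^ m))"
proof (induction m)
  case 0
  show ?case using rescaled_quot_fone by simp
next
  case (Suc m)
  show ?case
    using rescaled_quot_fmul[OF assms Suc] by (simp add: cP_mult)
qed

lemma rescaled_quot_fpow:
  assumes "rescaled_quot a b (cP q)"
  shows "rescaled_quot (fpow a k) (fpow b k) (cP (spow q k))"
  using rescaled_quot_fnpow[OF assms] rescaled_quot_fnpow[OF rescaled_quot_finv[OF assms]]
  by (simp add: fpow_def spow_def)

lemma pbr_sgn: "pbr q (sgn b) = pbr q b"
  by (simp add: pbr_def sgn_if)

lemma rescaled_quot_exchange_binomial:
  assumes "rescaled_quot a x (cP q)" and "e = 1 \<or> e = -1"
  shows "rescaled_quot (fadd (fconst (cP (pbr q (- e)))) (fmul (fconst (cP (pbr q e))) (fpow a e)))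
           (fadd fone (fpow x e)) (cP (1 \<oplus> spow q e))"
proof -
  obtain N D where x: "x = (N, D)" by (cases x)
  obtain l where a: "a = (l * N, l * D * cP q)"
    using assms(1) by (auto simp: rescaled_quot_def x)
  have pplus: "cP (pplus q) = cP q * cP (pminus q)"
    by (simp add: pplus_eq_mult_pminus cP_mult)
  from assms(2) show ?thesis
  proof
    assume "e = 1"
    have "l * cP q * cP (pminus q) * D * cP (1 \<oplus> q) = l * D * cP q * cP (pminus q * (1 \<oplus> q))"
      by (simp add: cP_mult ac_simps)
    then have "l * cP q * cP (pminus q) * D * cP (1 \<oplus> q) = l * D * cP q"
      by (simp add: pminus_mult_one_sfadd cP_one)
    with \<open>e = 1\<close> show ?thesis
      by (auto simp: rescaled_quot_def x a pbr_def pplus spow_def fpow_def fadd_def fmul_def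
          fconst_def fone_def algebra_simps intro!: exI[of _ "l * cP q * cP (pminus q)"])
  next
    assume "e = -1"
    have "l * cP q * cP (pminus q) * N * cP (1 \<oplus> inverse q) = l * N * cP (pplus q * (1 \<oplus> inverse q))"
      by (simp add: pplus cP_mult ac_simps)
    then have "l * cP q * cP (pminus q) * N * cP (1 \<oplus> inverse q) = l * N"
      by (simp add: pplus_mult_one_sfadd_inverse cP_one)
    with \<open>e = -1\<close> show ?thesis
      by (auto simp: rescaled_quot_def x a pbr_def pplus spow_def fpow_def fadd_def fmul_def
          finv_def fconst_def fone_def algebra_simps intro!: exI[of _ "l * cP q * cP (pminus q)"])
  qed
qed

lemma rescaled_quot_exchange_factor:
  assumes "rescaled_quot a x (cP q)"
  shows "rescaled_quot
           (fpow (fadd (fconst (cP (pbr q b))) (fmul (fconst (cP (pbr q (- b)))) (fpow a (- sgn b)))) (- b))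
           (fpow (fadd fone (fpow x (- sgn b))) (- b))
           (cP (spow (1 \<oplus> spow q (- sgn b)) (- b)))"
proof (cases "b = 0")
  case True
  then show ?thesis
    using rescaled_quot_fone by (simp add: fpow_def spow_def)
next
  case False
  then have "- sgn b = 1 \<or> - sgn b = -1"
    by (simp add: sgn_if)
  from rescaled_quot_exchange_binomial[OF assms this]
  have "rescaled_quot (fadd (fconst (cP (pbr q b))) (fmul (fconst (cP (pbr q (- b)))) (fpow a (- sgn b))))
          (fadd fone (fpow x (- sgn b))) (cP (1 \<oplus> spow q (- sgn b)))"
    by (simp add: pbr_sgn pbr_sgn[of q "- b", simplified])
  then show ?thesis
    by (rule rescaled_quot_fpow)
qed

definition seed_rescaled :: "(nat \<Rightarrow> 'p::semifield frac) \<Rightarrow> (nat \<Rightarrow> 'p frac) \<times> (nat \<Rightarrow> 'p) \<times> exmat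
    \<Rightarrow> (nat \<Rightarrow> sfe) \<times> exmat \<Rightarrow> bool" where
  "seed_rescaled \<rho> s t \<longleftrightarrow> snd (snd s) = snd t \<and>
     (\<forall>j. rescaled_quot (fst s j) (evalS \<rho> (fst t j)) (cP (fst (snd s) j)))"

lemma seed_rescaled_ymut:
  assumes "seed_rescaled \<rho> s t"
  shows "seed_rescaled \<rho> (ymut_coef k s) (ymut_sf k t)"
proof -
  obtain yt p B Y where s: "s = (yt, p, B)" and t: "t = (Y, B)"
    using assms by (cases s, cases t) (auto simp: seed_rescaled_def)
  have entry: "rescaled_quot (yt j) (evalS \<rho> (Y j)) (cP (p j))" for j
    using assms by (simp add: seed_rescaled_def s t)
  have "rescaled_quot (fst (ymut_coef k s) j) (evalS \<rho> (fst (ymut_sf k t) j))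
          (cP (fst (snd (ymut_coef k s)) j))" for j
  proof (cases "j = k")
    case True
    then show ?thesis
      using rescaled_quot_finv[OF entry[of k]]
      by (simp add: s t ymut_coef_def ymut_sf_def ymut_P_def)
  next
    case False
    then show ?thesis
      using rescaled_quot_fmul[OF entry[of j] rescaled_quot_exchange_factor[OF entry[of k], of "B k j"]]
      by (simp add: s t ymut_coef_def ymut_sf_def ymut_P_def evalS_sepow cP_mult)
  qed
  then show ?thesis
    by (simp add: seed_rescaled_def s t ymut_coef_def ymut_sf_def ymut_P_def Let_def)
qed

lemma seed_rescaled_fold_ymut:
  "seed_rescaled \<rho> s t \<Longrightarrow> seed_rescaled \<rho> (fold ymut_coef ks s) (fold ymut_sf ks t)"
  by (induction ks arbitrary: s t) (simp_all add: seed_rescaled_ymut)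

lemma seed_rescaled_initial:
  "seed_rescaled (\<lambda>i. fconst (cP (p0 i) * yv i)) ((\<lambda>i. fconst (yv i)), p0, B0) (SVar, B0)"
proof -
  have "rescaled_quot (fconst (yv i)) (fconst (cP (p0 i) * yv i)) (cP (p0 i))" for i
  proof -
    have "cP (inverse (p0 i)) * (cP (p0 i) * yv i) = yv i"
      by (metis cP_mult_inverse mult.assoc mult.commute mult_1_left)
    then show ?thesis
      by (auto simp: rescaled_quot_def fconst_def ac_simps cP_mult_inverse
          intro!: exI[of _ "cP (inverse (p0 i))"])
  qed
  then show ?thesis
    by (simp add: seed_rescaled_def)
qed

theorem mainTheorem1:
  fixes n :: nat and B0 :: exmat and p0 :: "nat \<Rightarrow> 'p::semifield"
    and ks :: "nat list" and j :: nat
  assumes "skew_symmetrizable n B0"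
    and "tree_vertex n ks"
    and "j < n"
  shows "feq (Ytilde B0 p0 ks j)
             (fmul (evalS (\<lambda>i. fconst (cP (p0 i) * yv i)) (Y_sf B0 ks j))
                   (finv (fconst (cP (pcoef B0 p0 ks j)))))"
proof -
  have "seed_rescaled (\<lambda>i. fconst (cP (p0 i) * yv i)) (coef_seed B0 p0 ks) (fold ymut_sf ks (SVar, B0))"
    unfolding coef_seed_def by (rule seed_rescaled_fold_ymut[OF seed_rescaled_initial])
  then show ?thesis
    unfolding Ytilde_def Y_sf_def pcoef_def seed_rescaled_def by (blast intro: rescaled_quot_feq)
qed

end
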